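(* Let $(u^{\mathrm{in}},v^{\mathrm{in}})\in(\dot H^0)^2$ and let $N$ be a positive integer. Then the solution $(u^N,v^N)$ of the Galerkin system $$\partial_t u^N_k=\tfrac12 i\,\mathcal P\Big[k\sum_{k_1+k_2=k}e^{3ikk_1k_2t}\big((\mathcal Pu^N)_{k_1}(\mathcal Pv^N)_{k_2}-(\mathcal Pu^N)_{k_1}(\mathcal Pu^N)_{k_2}\big)\Big],$$ $$\partial_t v^N_k=\tfrac12 i\,\mathcal P\Big[k\sum_{k_1+k_2=k}e^{3ikk_1k_2t}\big((\mathcal Pu^N)_{k_1}(\mathcal Pv^N)_{k_2}-(\mathcal Pv^N)_{k_1}(\mathcal Pv^N)_{k_2}\big)\Big],$$ $k\in\mathbb Z_0$, $u^N_k(0)=u^{\mathrm{in}}_k$, $v^N_k(0)=v^{\mathrm{in}}_k$, exists globally in time. Furthermore, the quantity $$\mathcal E(u^N(t),v^N(t)):=2\|u^N(t)\|_{\dot H^0}^2+2\|v^N(t)\|_{\dot H^0}^2+\|u^N(t)-v^N(t)\|_{\dot H^0}^2$$ is conserved in time.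
   Context: $\mathbb T=[0,2\pi]$ periodic, $\mathbb Z_0=\mathbb Z\setminus\{0\}$. Mean-zero real-valued functions are identified with their Fourier coefficients $(u_k)_{k\in\mathbb Z_0}$, $\overline{u_k}=u_{-k}$. For $s\in\mathbb R$, $\|u\|_{\dot H^s}^2=\sum_{k\in\mathbb Z_0}|k|^{2s}|u_k|^2$, $\dot H^s$ the space of such $u$ with finite norm, and $\|(u,v)\|^2_{(\dot H^s)^2}=\|u\|^2_{\dot H^s}+\|v\|^2_{\dot H^s}$. For the fixed integer $N$, $\mathcal P$ is the projection onto Fourier modes $|k|\leq N$: $(\mathcal Pu)_k=u_k$ if $|k|\leq N$ and $0$ if $|k|>N$; applied to the bracketed sequence indexed by $k$, it sets the $k$-th component to zero when $|k|>N$. The Galerkin system is a finite system of ODEs, locally well-posed in $(\dot H^0)^2$. *)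

theory Defs
  imports "HOL-Analysis.Analysis"
begin

text \<open>Mean-zero real-valued functions on the torus are represented by their Fourier
coefficients, a map int => complex; the (meaningless) zero mode is fixed to 0.\<close>

definition in_H0 :: "(int \<Rightarrow> complex) \<Rightarrow> bool" where
  "in_H0 u \<longleftrightarrow> u 0 = 0 \<and> (\<forall>k. cnj (u k) = u (- k))
     \<and> (\<lambda>k. (cmod (u k))\<^sup>2) summable_on (UNIV - {0})"

definition H0_norm_sq :: "(int \<Rightarrow> complex) \<Rightarrow> real" where
  "H0_norm_sq u = infsum (\<lambda>k. (cmod (u k))\<^sup>2) (UNIV - {0})"

definition Proj :: "nat \<Rightarrow> (int \<Rightarrow> complex) \<Rightarrow> int \<Rightarrow> complex" where
  "Proj N u k = (if \<bar>k\<bar> \<le> int N then u k else 0)"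

definition galerkin_rhs ::
  "nat \<Rightarrow> real \<Rightarrow> (int \<Rightarrow> int \<Rightarrow> complex) \<Rightarrow> int \<Rightarrow> complex" where
  "galerkin_rhs N t B k = Proj N (\<lambda>k. (\<i> / 2) * of_int k *
      infsum (\<lambda>k1. exp (\<i> * of_real (3 * of_int k * of_int k1 * of_int (k - k1) * t)) * B k1 (k - k1))
             {k1. k1 \<noteq> 0 \<and> k - k1 \<noteq> 0}) k"

definition rhs_u :: "nat \<Rightarrow> real \<Rightarrow> (int \<Rightarrow> complex) \<Rightarrow> (int \<Rightarrow> complex) \<Rightarrow> int \<Rightarrow> complex" where
  "rhs_u N t a b = galerkin_rhs N t
     (\<lambda>k1 k2. Proj N a k1 * Proj N b k2 - Proj N a k1 * Proj N a k2)"

definition rhs_v :: "nat \<Rightarrow> real \<Rightarrow> (int \<Rightarrow> complex) \<Rightarrow> (int \<Rightarrow> complex) \<Rightarrow> int \<Rightarrow> complex" where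
  "rhs_v N t a b = galerkin_rhs N t
     (\<lambda>k1 k2. Proj N a k1 * Proj N b k2 - Proj N b k1 * Proj N b k2)"

definition galerkin_solution ::
  "nat \<Rightarrow> (int \<Rightarrow> complex) \<Rightarrow> (int \<Rightarrow> complex) \<Rightarrow> (real \<Rightarrow> int \<Rightarrow> complex) \<Rightarrow> (real \<Rightarrow> int \<Rightarrow> complex) \<Rightarrow> bool" where
  "galerkin_solution N uin vin u v \<longleftrightarrow>
     u 0 = uin \<and> v 0 = vin \<and>
     (\<forall>t\<ge>0. in_H0 (u t) \<and> in_H0 (v t)) \<and>
     (\<forall>t\<ge>0. \<forall>k. ((\<lambda>s. u s k) has_vector_derivative rhs_u N t (u t) (v t) k) (at t within {0..})
              \<and> ((\<lambda>s. v s k) has_vector_derivative rhs_v N t (u t) (v t) k) (at t within {0..}))"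

definition energy :: "(int \<Rightarrow> complex) \<Rightarrow> (int \<Rightarrow> complex) \<Rightarrow> real" where
  "energy u v = 2 * H0_norm_sq u + 2 * H0_norm_sq v + H0_norm_sq (\<lambda>k. u k - v k)"

end

theory Submission
  imports Defs
begin

text \<open>On the retained modes \<open>0 < |k| \<le> N\<close>, the time derivative of
  \<open>2|u|\<^sup>2 + 2|v|\<^sup>2 + |u - v|\<^sup>2\<close> is a combination of triad sums
  \<open>T(f,g,h) = \<Sum> (k1 + k2) exp(3i k1 k2 (k1 + k2) t) f(k1) g(k2) h(-k1-k2)\<close>.
  The phase is invariant under permutations of the triad \<open>(k1, k2, -k1-k2)\<close> while the weights
  \<open>k1 + k2, -k1, -k2\<close> add up to zero, so the three cyclic rearrangements of \<open>T\<close> cancel, and with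
  them the derivative of the energy; the other modes do not move.

  For existence, the finite-dimensional right-hand side is composed with the radial retraction
  onto a ball, which makes it globally Lipschitz and bounded, so Picard iteration gives a global
  solution. The energy argument applies verbatim to this modified flow, which therefore stays
  inside the ball and solves the Galerkin system itself.\<close>

section \<open>Global solutions of globally Lipschitz initial value problems\<close>

lemma at_within_Ici_eq_at_within_Icc:
  fixes t T :: real
  assumes "0 \<le> t" "t < T"
  shows "at t within {0..} = at t within {0..T}"
  by (rule at_within_nhd[where S="{..<T}"]) (use assms in auto)

lemma integral_has_vector_derivative_Ici:
  fixes g :: "real \<Rightarrow> 'a::banach"
  assumes "continuous_on {0..} g" "0 \<le> t"
  shows "((\<lambda>u. integral {0..u} g) has_vector_derivative g t) (at t within {0..})"
proof -
  have "continuous_on {0..t+1} g"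
    using assms(1) by (rule continuous_on_subset) auto
  from integral_has_vector_derivative[OF this, of t] assms(2)
  show ?thesis
    using at_within_Ici_eq_at_within_Icc[of t "t+1"] by simp
qed

lemma continuous_on_Ici_if_Icc:
  fixes f :: "real \<Rightarrow> 'a::topological_space"
  assumes "\<And>T. 0 \<le> T \<Longrightarrow> continuous_on {0..T} f"
  shows "continuous_on {0..} f"
  unfolding continuous_on_eq_continuous_within
proof
  fix t :: real
  assume "t \<in> {0..}"
  then have "continuous (at t within {0..t+1}) f"
    using assms[of "t+1"] by (auto simp: continuous_on_eq_continuous_within)
  with \<open>t \<in> {0..}\<close> show "continuous (at t within {0..}) f"
    using at_within_Ici_eq_at_within_Icc[of t "t+1"] by (simp add: continuous_within)
qed

lemma has_vector_derivative_zero_Ici_imp_constant: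
  fixes f :: "real \<Rightarrow> 'a::real_normed_vector"
  assumes "\<And>s. 0 \<le> s \<Longrightarrow> (f has_vector_derivative 0) (at s within {0..})" "0 \<le> t"
  shows "f t = f 0"
proof -
  obtain c where "\<And>x. x \<in> {0..} \<Longrightarrow> f x = c"
    by (rule has_vector_derivative_zero_constant[of "{0..}" f]) (use assms in auto)
  then show ?thesis
    using assms(2) by force
qed

lemma integral_power_Icc_0:
  fixes t :: real
  assumes "0 \<le> t"
  shows "integral {0..t} (\<lambda>s. s ^ n) = t ^ Suc n / Suc n"
proof -
  have "((\<lambda>s. s ^ Suc n / Suc n) has_real_derivative (Suc n * s ^ (Suc n - Suc 0)) / Suc n) (at s within {0..t})"
    for s :: real
    by (intro DERIV_cdivide DERIV_pow)
  then have "((\<lambda>s. s ^ Suc n / Suc n) has_vector_derivative s ^ n) (at s within {0..t})" for s :: real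
    by (simp add: has_real_derivative_iff_has_vector_derivative[symmetric])
  from fundamental_theorem_of_calculus[OF assms this]
  show ?thesis
    by (simp add: integral_unique)
qed

primrec picard_iter :: "(real \<Rightarrow> 'a \<Rightarrow> 'a) \<Rightarrow> 'a \<Rightarrow> nat \<Rightarrow> real \<Rightarrow> 'a::banach" where
  "picard_iter F x0 0 = (\<lambda>t. x0)"
| "picard_iter F x0 (Suc n) = (\<lambda>t. x0 + integral {0..t} (\<lambda>s. F s (picard_iter F x0 n s)))"

locale globally_lipschitz_field =
  fixes F :: "real \<Rightarrow> 'a::banach \<Rightarrow> 'a" and L M :: real
  assumes continuous_field: "continuous_on UNIV (\<lambda>p. F (fst p) (snd p))"
    and lipschitz: "\<And>t x y. norm (F t x - F t y) \<le> L * norm (x - y)"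
    and bounded: "\<And>t x. norm (F t x) \<le> M"
    and L_pos: "0 < L"
begin

lemma M_nonneg: "0 \<le> M"
  using bounded[of 0 0] norm_ge_zero order_trans by blast

lemma continuous_on_field_along:
  assumes "continuous_on {0..} y"
  shows "continuous_on {0..} (\<lambda>s. F s (y s))"
  using continuous_on_compose2[OF continuous_field continuous_on_Pair[OF continuous_on_id assms]]
  by simp

lemma integrable_field_along:
  assumes "continuous_on {0..} y"
  shows "(\<lambda>s. F s (y s)) integrable_on {0..t}"
  by (rule integrable_continuous_interval,
      rule continuous_on_subset[OF continuous_on_field_along[OF assms]]) auto

lemma picard_step_has_vector_derivative:
  assumes "continuous_on {0..} y" "0 \<le> t"
  shows "((\<lambda>u. x0 + integral {0..u} (\<lambda>s. F s (y s))) has_vector_derivative F t (y t))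
           (at t within {0..})"
  using integral_has_vector_derivative_Ici[OF continuous_on_field_along[OF assms(1)] assms(2)]
  by (auto intro!: derivative_eq_intros)

lemma continuous_on_picard_iter: "continuous_on {0..} (picard_iter F x0 n)"
proof (induction n)
  case (Suc n)
  show ?case
    unfolding continuous_on_eq_continuous_within picard_iter.simps
    using has_vector_derivative_continuous[OF picard_step_has_vector_derivative[OF Suc]] by auto
qed simp

lemma picard_iter_diff_bound:
  assumes "0 \<le> t"
  shows "norm (picard_iter F x0 (Suc n) t - picard_iter F x0 n t) \<le> M * L ^ n * t ^ Suc n / fact (Suc n)"
  using assms
proof (induction n arbitrary: t)
  case 0
  have "norm (integral {0..t} (\<lambda>s. F s x0)) \<le> integral {0..t} (\<lambda>s. M * s ^ 0)"
    by (rule integral_norm_bound_integral)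
       (use bounded integrable_field_along[of "\<lambda>_. x0"] in auto)
  with 0 show ?case
    using integral_power_Icc_0[of t 0] by (simp add: mult.commute)
next
  case (Suc n)
  let ?P = "picard_iter F x0"
  have "?P (Suc (Suc n)) t - ?P (Suc n) t = integral {0..t} (\<lambda>s. F s (?P (Suc n) s) - F s (?P n s))"
    using integral_diff[OF integrable_field_along integrable_field_along, of "?P (Suc n)" "?P n" t]
    by (simp add: continuous_on_picard_iter del: picard_iter.simps) simp
  also have "norm \<dots> \<le> integral {0..t} (\<lambda>s. (L * M * L ^ n / fact (Suc n)) * s ^ Suc n)"
  proof (rule integral_norm_bound_integral)
    fix s assume s: "s \<in> {0..t}"
    have "norm (F s (?P (Suc n) s) - F s (?P n s)) \<le> L * norm (?P (Suc n) s - ?P n s)"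
      by (rule lipschitz)
    also have "\<dots> \<le> L * (M * L ^ n * s ^ Suc n / fact (Suc n))"
      using Suc.IH[of s] s L_pos by (intro mult_left_mono) auto
    finally show "norm (F s (?P (Suc n) s) - F s (?P n s)) \<le> (L * M * L ^ n / fact (Suc n)) * s ^ Suc n"
      by simp
  next
    show "(\<lambda>s. F s (?P (Suc n) s) - F s (?P n s)) integrable_on {0..t}"
      by (intro integrable_diff integrable_field_along continuous_on_picard_iter)
  qed (intro integrable_continuous_interval continuous_intros)
  also have "\<dots> = (L * M * L ^ n / fact (Suc n)) * (t ^ Suc (Suc n) / Suc (Suc n))"
    using Suc.prems integral_power_Icc_0[of t "Suc n"] by (simp only: integral_mult_right)
  also have "\<dots> = M * L ^ Suc n * t ^ Suc (Suc n) / fact (Suc (Suc n))"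
    by (simp add: field_simps del: of_nat_Suc)
  finally show ?case .
qed

definition picard_limit :: "'a \<Rightarrow> real \<Rightarrow> 'a" where
  "picard_limit x0 t = x0 + (\<Sum>i. picard_iter F x0 (Suc i) t - picard_iter F x0 i t)"

lemma uniform_limit_picard_iter:
  assumes "0 \<le> T"
  shows "uniform_limit {0..T} (picard_iter F x0) (picard_limit x0) sequentially"
proof -
  let ?P = "picard_iter F x0"
  define c where "c i = (M / L) * ((L * T) ^ Suc i / fact (Suc i))" for i
  have "summable (\<lambda>i. (L * T) ^ i / fact i)"
    using summable_exp[of "L * T"] by (simp add: field_simps)
  then have "summable (\<lambda>i. (L * T) ^ Suc i / fact (Suc i))"
    by (subst summable_Suc_iff)
  then have "summable c"
    unfolding c_def by (rule summable_mult)
  moreover have "norm (?P (Suc i) t - ?P i t) \<le> c i" if "t \<in> {0..T}" for i t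
  proof -
    have "norm (?P (Suc i) t - ?P i t) \<le> M * L ^ i * t ^ Suc i / fact (Suc i)"
      using that picard_iter_diff_bound by auto
    also have "\<dots> \<le> M * L ^ i * T ^ Suc i / fact (Suc i)"
      using that M_nonneg L_pos by (intro divide_right_mono mult_left_mono power_mono) auto
    also have "\<dots> = c i"
      using L_pos by (simp add: c_def power_mult_distrib field_simps)
    finally show ?thesis .
  qed
  ultimately have "uniform_limit {0..T} (\<lambda>n t. \<Sum>i<n. ?P (Suc i) t - ?P i t)
      (\<lambda>t. \<Sum>i. ?P (Suc i) t - ?P i t) sequentially"
    by (intro Weierstrass_m_test) auto
  moreover have "dist (\<Sum>i<n. ?P (Suc i) t - ?P i t) (\<Sum>i. ?P (Suc i) t - ?P i t)
      = dist (?P n t) (picard_limit x0 t)" for n t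
  proof -
    have telescope: "(\<Sum>i<n. ?P (Suc i) t - ?P i t) = ?P n t - x0"
      using sum_lessThan_telescope[of "\<lambda>i. ?P i t" n] by simp
    show ?thesis
      unfolding picard_limit_def dist_norm telescope by (simp add: algebra_simps del: picard_iter.simps(2))
  qed
  ultimately show ?thesis
    unfolding uniform_limit_iff by simp
qed

lemma continuous_on_picard_limit: "continuous_on {0..} (picard_limit x0)"
  by (rule continuous_on_Ici_if_Icc, rule uniform_limit_theorem[OF _ uniform_limit_picard_iter])
     (auto intro!: always_eventually continuous_on_subset[OF continuous_on_picard_iter])

lemma uniform_limit_field_along_picard_iter:
  assumes "0 \<le> t"
  shows "uniform_limit {0..t} (\<lambda>n s. F s (picard_iter F x0 n s)) (\<lambda>s. F s (picard_limit x0 s)) sequentially"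
  unfolding uniform_limit_iff
proof (intro allI impI)
  fix e :: real
  assume "0 < e"
  then have "\<forall>\<^sub>F n in sequentially. \<forall>s\<in>{0..t}. dist (picard_iter F x0 n s) (picard_limit x0 s) < e / L"
    using uniform_limit_picard_iter[OF assms] L_pos unfolding uniform_limit_iff by auto
  then show "\<forall>\<^sub>F n in sequentially. \<forall>s\<in>{0..t}. dist (F s (picard_iter F x0 n s)) (F s (picard_limit x0 s)) < e"
  proof (rule eventually_mono, intro ballI)
    fix n s
    assume "\<forall>s\<in>{0..t}. dist (picard_iter F x0 n s) (picard_limit x0 s) < e / L" "s \<in> {0..t}"
    then have "L * dist (picard_iter F x0 n s) (picard_limit x0 s) < e"
      using L_pos by (simp add: field_simps)
    moreover have "dist (F s (picard_iter F x0 n s)) (F s (picard_limit x0 s))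
        \<le> L * dist (picard_iter F x0 n s) (picard_limit x0 s)"
      using lipschitz by (simp add: dist_norm)
    ultimately show "dist (F s (picard_iter F x0 n s)) (F s (picard_limit x0 s)) < e"
      by linarith
  qed
qed

lemma picard_limit_integral_equation:
  assumes "0 \<le> t"
  shows "picard_limit x0 t = x0 + integral {0..t} (\<lambda>s. F s (picard_limit x0 s))"
proof -
  obtain I J where I: "\<And>n. ((\<lambda>s. F s (picard_iter F x0 n s)) has_integral I n) {0..t}"
    and J: "((\<lambda>s. F s (picard_limit x0 s)) has_integral J) {0..t}" and "I \<longlonglongrightarrow> J"
    by (rule uniform_limit_integral[OF uniform_limit_field_along_picard_iter[OF assms]])
       (auto intro!: continuous_on_subset[OF continuous_on_field_along[OF continuous_on_picard_iter]])
  then have "(\<lambda>n. picard_iter F x0 (Suc n) t) \<longlonglongrightarrow> x0 + J"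
    unfolding picard_iter.simps integral_unique[OF I] by (intro tendsto_add tendsto_const)
  moreover have "(\<lambda>n. picard_iter F x0 (Suc n) t) \<longlonglongrightarrow> picard_limit x0 t"
    using LIMSEQ_Suc[OF tendsto_uniform_limitI[OF uniform_limit_picard_iter[OF assms], of t]] assms
    by simp
  ultimately show ?thesis
    using J LIMSEQ_unique integral_unique by metis
qed

theorem global_solution_exists:
  "\<exists>X. X 0 = x0 \<and> (\<forall>t\<ge>0. (X has_vector_derivative F t (X t)) (at t within {0..}))"
proof (intro exI conjI allI impI)
  show "picard_limit x0 0 = x0"
    using picard_limit_integral_equation[of 0] by simp
  fix t :: real
  assume "0 \<le> t"
  show "(picard_limit x0 has_vector_derivative F t (picard_limit x0 t)) (at t within {0..})"
    by (rule has_vector_derivative_transform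
        [OF _ _ picard_step_has_vector_derivative[OF continuous_on_picard_limit \<open>0 \<le> t\<close>]])
       (use \<open>0 \<le> t\<close> picard_limit_integral_equation in auto)
qed

end

section \<open>The Galerkin nonlinearity\<close>

definition modes :: "nat \<Rightarrow> int set" where
  "modes N = {k. k \<noteq> 0 \<and> \<bar>k\<bar> \<le> int N}"

definition resonance_phase :: "real \<Rightarrow> int \<Rightarrow> complex" where
  "resonance_phase t m = exp (\<i> * of_real (3 * of_int m * t))"

definition resonant_product :: "nat \<Rightarrow> real \<Rightarrow> (int \<Rightarrow> complex) \<Rightarrow> (int \<Rightarrow> complex) \<Rightarrow> int \<Rightarrow> complex" where
  "resonant_product N t f g k =
     (\<Sum>k1 | k1 \<in> modes N \<and> k - k1 \<in> modes N. resonance_phase t (k * k1 * (k - k1)) * (f k1 * g (k - k1)))"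

definition conj_symmetric :: "(int \<Rightarrow> complex) \<Rightarrow> bool" where
  "conj_symmetric f \<longleftrightarrow> (\<forall>k. cnj (f k) = f (- k))"

lemma finite_modes [simp]: "finite (modes N)"
  by (rule finite_subset[of _ "{- int N..int N}"]) (auto simp: modes_def)

lemma uminus_in_modes_iff [simp]: "- k \<in> modes N \<longleftrightarrow> k \<in> modes N"
  by (auto simp: modes_def)

lemma zero_notin_modes [simp]: "0 \<notin> modes N"
  by (simp add: modes_def)

lemma finite_interacting_modes [simp]: "finite {k1. k1 \<in> modes N \<and> k - k1 \<in> modes N}"
  by (rule finite_subset[of _ "modes N"]) auto

lemma galerkin_rhs_Proj_diff:
  "galerkin_rhs N t (\<lambda>k1 k2. Proj N a k1 * Proj N b k2 - Proj N c k1 * Proj N d k2) k =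
     (if k \<in> modes N
      then \<i> / 2 * of_int k * (resonant_product N t a b k - resonant_product N t c d k) else 0)"
proof -
  let ?f = "\<lambda>k1. exp (\<i> * of_real (3 * of_int k * of_int k1 * of_int (k - k1) * t)) *
      (Proj N a k1 * Proj N b (k - k1) - Proj N c k1 * Proj N d (k - k1))"
  let ?I = "{k1. k1 \<in> modes N \<and> k - k1 \<in> modes N}"
  have "infsum ?f {k1. k1 \<noteq> 0 \<and> k - k1 \<noteq> 0} = infsum ?f ?I"
    by (rule infsum_cong_neutral) (auto simp: modes_def Proj_def)
  also have "\<dots> = sum ?f ?I"
    by simp
  also have "\<dots> = resonant_product N t a b k - resonant_product N t c d k"
    unfolding resonant_product_def sum_subtractf[symmetric]
    by (rule sum.cong) (auto simp: modes_def Proj_def resonance_phase_def algebra_simps)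
  finally show ?thesis
    unfolding galerkin_rhs_def by (auto simp: Proj_def modes_def)
qed

lemma rhs_u_altdef:
  "rhs_u N t a b k = (if k \<in> modes N
     then \<i> / 2 * of_int k * (resonant_product N t a b k - resonant_product N t a a k) else 0)"
  unfolding rhs_u_def galerkin_rhs_Proj_diff ..

lemma rhs_v_altdef:
  "rhs_v N t a b k = (if k \<in> modes N
     then \<i> / 2 * of_int k * (resonant_product N t a b k - resonant_product N t b b k) else 0)"
  unfolding rhs_v_def galerkin_rhs_Proj_diff ..

lemma cnj_resonance_phase: "cnj (resonance_phase t m) = resonance_phase t (- m)"
  unfolding resonance_phase_def exp_cnj by simp

lemma resonant_product_uminus:
  assumes "conj_symmetric f" "conj_symmetric g"
  shows "resonant_product N t f g (- k) = cnj (resonant_product N t f g k)"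
proof -
  have "cnj (resonant_product N t f g k) = (\<Sum>k1 | k1 \<in> modes N \<and> k - k1 \<in> modes N.
      resonance_phase t (- k * - k1 * (- k - - k1)) * (f (- k1) * g (- k - - k1)))"
    using assms unfolding resonant_product_def cnj_sum
    by (simp add: cnj_resonance_phase conj_symmetric_def algebra_simps)
  also have "\<dots> = resonant_product N t f g (- k)"
    unfolding resonant_product_def
    by (rule sum.reindex_bij_witness[of _ uminus uminus]) (auto simp: modes_def)
  finally show ?thesis
    by simp
qed

lemma conj_symmetric_rhs_u:
  assumes "conj_symmetric a" "conj_symmetric b"
  shows "conj_symmetric (rhs_u N t a b)"
  using resonant_product_uminus[OF assms] resonant_product_uminus[OF assms(1,1)]
  unfolding conj_symmetric_def rhs_u_altdef by auto

lemma conj_symmetric_rhs_v: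
  assumes "conj_symmetric a" "conj_symmetric b"
  shows "conj_symmetric (rhs_v N t a b)"
  using resonant_product_uminus[OF assms] resonant_product_uminus[OF assms(2,2)]
  unfolding conj_symmetric_def rhs_v_altdef by auto

lemma resonant_product_scale:
  "resonant_product N t (\<lambda>j. c * f j) (\<lambda>j. c * g j) k = c\<^sup>2 * resonant_product N t f g k"
  unfolding resonant_product_def sum_distrib_left
  by (rule sum.cong) (simp_all add: power2_eq_square algebra_simps)

lemma rhs_scale:
  "rhs_u N t (\<lambda>j. c * a j) (\<lambda>j. c * b j) k = c\<^sup>2 * rhs_u N t a b k"
  "rhs_v N t (\<lambda>j. c * a j) (\<lambda>j. c * b j) k = c\<^sup>2 * rhs_v N t a b k"
  by (simp_all add: rhs_u_altdef rhs_v_altdef resonant_product_scale algebra_simps)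

lemma resonant_product_cong:
  "(\<And>j. j \<in> modes N \<Longrightarrow> f j = f' j) \<Longrightarrow> (\<And>j. j \<in> modes N \<Longrightarrow> g j = g' j) \<Longrightarrow>
    resonant_product N t f g k = resonant_product N t f' g' k"
  unfolding resonant_product_def by (rule sum.cong) auto

lemma rhs_cong:
  assumes "\<And>j. j \<in> modes N \<Longrightarrow> a j = a' j" "\<And>j. j \<in> modes N \<Longrightarrow> b j = b' j"
  shows "rhs_u N t a b k = rhs_u N t a' b' k" "rhs_v N t a b k = rhs_v N t a' b' k"
  using resonant_product_cong[OF assms(1,2)] resonant_product_cong[OF assms(1,1)]
    resonant_product_cong[OF assms(2,2)]
  by (simp_all add: rhs_u_altdef rhs_v_altdef)

definition triads :: "nat \<Rightarrow> (int \<times> int) set" where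
  "triads N = {(k1, k2). k1 \<in> modes N \<and> k2 \<in> modes N \<and> k1 + k2 \<in> modes N}"

definition triad_sum ::
  "nat \<Rightarrow> real \<Rightarrow> (int \<Rightarrow> complex) \<Rightarrow> (int \<Rightarrow> complex) \<Rightarrow> (int \<Rightarrow> complex) \<Rightarrow> complex" where
  "triad_sum N t f g h = (\<Sum>(k1, k2)\<in>triads N.
     of_int (k1 + k2) * resonance_phase t ((k1 + k2) * k1 * k2) * (f k1 * g k2 * h (- (k1 + k2))))"

lemma sum_modes_resonant_product:
  "(\<Sum>k\<in>modes N. h (- k) * (of_int k * resonant_product N t f g k)) = triad_sum N t f g h"
proof -
  have "(\<Sum>k\<in>modes N. h (- k) * (of_int k * resonant_product N t f g k)) =
      (\<Sum>(k, k1)\<in>Sigma (modes N) (\<lambda>k. {k1. k1 \<in> modes N \<and> k - k1 \<in> modes N}).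
        of_int k * resonance_phase t (k * k1 * (k - k1)) * (f k1 * g (k - k1) * h (- k)))"
    unfolding resonant_product_def sum_distrib_left
    by (subst sum.Sigma) (auto simp: algebra_simps)
  also have "\<dots> = triad_sum N t f g h"
    unfolding triad_sum_def
    by (rule sum.reindex_bij_witness[of _ "\<lambda>(k1, k2). (k1 + k2, k1)" "\<lambda>(k, k1). (k1, k - k1)"])
       (auto simp: triads_def)
  finally show ?thesis .
qed

lemma triad_sum_cyclic: "triad_sum N t f g h + triad_sum N t h g f + triad_sum N t f h g = 0"
proof -
  define C where "C = (\<lambda>(k1, k2). resonance_phase t ((k1 + k2) * k1 * k2) * (f k1 * g k2 * h (- (k1 + k2))))"
  have fgh: "triad_sum N t f g h = (\<Sum>(k1, k2)\<in>triads N. of_int (k1 + k2) * C (k1, k2))"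
    unfolding triad_sum_def C_def by (simp add: case_prod_beta mult.assoc)
  have hgf: "triad_sum N t h g f = (\<Sum>(k1, k2)\<in>triads N. of_int (- k1) * C (k1, k2))"
    unfolding triad_sum_def C_def
    by (rule sum.reindex_bij_witness[of _ "\<lambda>(k1, k2). (- (k1 + k2), k2)" "\<lambda>(k1, k2). (- (k1 + k2), k2)"])
       (auto simp: triads_def modes_def algebra_simps)
  have fhg: "triad_sum N t f h g = (\<Sum>(k1, k2)\<in>triads N. of_int (- k2) * C (k1, k2))"
    unfolding triad_sum_def C_def
    by (rule sum.reindex_bij_witness[of _ "\<lambda>(k1, k2). (k1, - (k1 + k2))" "\<lambda>(k1, k2). (k1, - (k1 + k2))"])
       (auto simp: triads_def modes_def algebra_simps)
  show ?thesis
    unfolding fgh hgf fhg sum.distrib[symmetric] by (rule sum.neutral) (auto simp: algebra_simps)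
qed

section \<open>Energy conservation\<close>

lemma sum_modes_rhs_u:
  "(\<Sum>k\<in>modes N. h (- k) * rhs_u N t a b k) = \<i> / 2 * (triad_sum N t a b h - triad_sum N t a a h)"
  unfolding rhs_u_altdef sum_modes_resonant_product[symmetric] sum_distrib_left sum_subtractf[symmetric]
  by (rule sum.cong) (simp_all add: algebra_simps)

lemma sum_modes_rhs_v:
  "(\<Sum>k\<in>modes N. h (- k) * rhs_v N t a b k) = \<i> / 2 * (triad_sum N t a b h - triad_sum N t b b h)"
  unfolding rhs_v_altdef sum_modes_resonant_product[symmetric] sum_distrib_left sum_subtractf[symmetric]
  by (rule sum.cong) (simp_all add: algebra_simps)

text \<open>\<open>3a - b\<close> and \<open>3b - a\<close> are the derivatives of \<open>2|a|\<^sup>2 + 2|b|\<^sup>2 + |a - b|\<^sup>2\<close> with respect to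
  \<open>cnj a\<close> and \<open>cnj b\<close>.\<close>

definition energy_flux :: "nat \<Rightarrow> real \<Rightarrow> (int \<Rightarrow> complex) \<Rightarrow> (int \<Rightarrow> complex) \<Rightarrow> complex" where
  "energy_flux N t a b = (\<Sum>k\<in>modes N.
     cnj (3 * a k - b k) * rhs_u N t a b k + cnj (3 * b k - a k) * rhs_v N t a b k)"

lemma energy_flux_zero:
  assumes a: "conj_symmetric a" and b: "conj_symmetric b"
  shows "energy_flux N t a b = 0"
proof -
  let ?T = "triad_sum N t"
  have "energy_flux N t a b =
      3 * (\<Sum>k\<in>modes N. a (- k) * rhs_u N t a b k) - (\<Sum>k\<in>modes N. b (- k) * rhs_u N t a b k)
    + 3 * (\<Sum>k\<in>modes N. b (- k) * rhs_v N t a b k) - (\<Sum>k\<in>modes N. a (- k) * rhs_v N t a b k)"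
    using a b unfolding energy_flux_def conj_symmetric_def
    by (simp add: sum.distrib sum_subtractf sum_distrib_left algebra_simps)
  also have "\<dots> = \<i> / 2 * (2 * ?T a b a + 2 * ?T a b b - 3 * ?T a a a - 3 * ?T b b b + ?T a a b + ?T b b a)"
    unfolding sum_modes_rhs_u sum_modes_rhs_v by (simp add: algebra_simps)
  also have "\<dots> = 0"
  proof -
    have "?T a a a = 0" "?T b b b = 0"
      using triad_sum_cyclic[of N t a a a] triad_sum_cyclic[of N t b b b] by simp_all
    moreover have "?T a a b = - 2 * ?T a b a" "?T b b a = - 2 * ?T a b b"
      using triad_sum_cyclic[of N t a b a] triad_sum_cyclic[of N t a b b]
      by (simp_all add: algebra_simps add_eq_0_iff2)
    ultimately show ?thesis
      by (simp add: algebra_simps)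
  qed
  finally show ?thesis .
qed

definition modal_energy :: "nat \<Rightarrow> (int \<Rightarrow> complex) \<Rightarrow> (int \<Rightarrow> complex) \<Rightarrow> real" where
  "modal_energy N a b = (\<Sum>k\<in>modes N. 2 * (cmod (a k))\<^sup>2 + 2 * (cmod (b k))\<^sup>2 + (cmod (a k - b k))\<^sup>2)"

lemma modal_energy_nonneg: "0 \<le> modal_energy N a b"
  unfolding modal_energy_def by (intro sum_nonneg) auto

lemma cmod_le_sqrt_modal_energy:
  assumes "k \<in> modes N"
  shows "cmod (a k) \<le> sqrt (modal_energy N a b)" "cmod (b k) \<le> sqrt (modal_energy N a b)"
proof -
  have "2 * (cmod (a k))\<^sup>2 + 2 * (cmod (b k))\<^sup>2 + (cmod (a k - b k))\<^sup>2 \<le> modal_energy N a b"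
    unfolding modal_energy_def by (rule member_le_sum) (use assms in auto)
  then have "(cmod (a k))\<^sup>2 \<le> modal_energy N a b" "(cmod (b k))\<^sup>2 \<le> modal_energy N a b"
    using zero_le_power2[of "cmod (a k)"] zero_le_power2[of "cmod (b k)"]
      zero_le_power2[of "cmod (a k - b k)"] by linarith+
  then show "cmod (a k) \<le> sqrt (modal_energy N a b)" "cmod (b k) \<le> sqrt (modal_energy N a b)"
    by (simp_all add: real_le_rsqrt)
qed

lemma modal_energy_has_vector_derivative:
  assumes du: "\<And>k. k \<in> modes N \<Longrightarrow> ((\<lambda>s. u s k) has_vector_derivative du k) (at t within S)"
    and dv: "\<And>k. k \<in> modes N \<Longrightarrow> ((\<lambda>s. v s k) has_vector_derivative dv k) (at t within S)"
  defines "y \<equiv> \<Sum>k\<in>modes N. cnj (3 * u t k - v t k) * du k + cnj (3 * v t k - u t k) * dv k"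
  shows "((\<lambda>s. complex_of_real (modal_energy N (u s) (v s))) has_vector_derivative y + cnj y) (at t within S)"
proof -
  have "(\<Sum>k\<in>modes N. 2 * (a k * cnj (a k)) + 2 * (b k * cnj (b k)) + (a k - b k) * cnj (a k - b k))
      = complex_of_real (modal_energy N a b)" for a b
    unfolding modal_energy_def complex_norm_square[symmetric] by simp
  moreover have "((\<lambda>s. \<Sum>k\<in>modes N. 2 * (u s k * cnj (u s k)) + 2 * (v s k * cnj (v s k))
        + (u s k - v s k) * cnj (u s k - v s k)) has_vector_derivative
      (\<Sum>k\<in>modes N. 2 * (u t k * cnj (du k) + du k * cnj (u t k)) + 2 * (v t k * cnj (dv k) + dv k * cnj (v t k))
        + ((u t k - v t k) * cnj (du k - dv k) + (du k - dv k) * cnj (u t k - v t k)))) (at t within S)"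
    by (intro has_vector_derivative_sum has_vector_derivative_add has_vector_derivative_mult
        has_vector_derivative_mult_right has_vector_derivative_cnj has_vector_derivative_diff du dv)
  moreover have "(\<Sum>k\<in>modes N. 2 * (u t k * cnj (du k) + du k * cnj (u t k)) + 2 * (v t k * cnj (dv k) + dv k * cnj (v t k))
        + ((u t k - v t k) * cnj (du k - dv k) + (du k - dv k) * cnj (u t k - v t k))) = y + cnj y"
    unfolding y_def cnj_sum sum.distrib[symmetric] by (rule sum.cong) (simp_all add: algebra_simps)
  ultimately show ?thesis
    by simp
qed

lemma modal_energy_constant:
  fixes c :: "real \<Rightarrow> complex"
  assumes symmetric: "\<And>s. 0 \<le> s \<Longrightarrow> conj_symmetric (u s) \<and> conj_symmetric (v s)"
    and du: "\<And>s k. 0 \<le> s \<Longrightarrow> k \<in> modes N \<Longrightarrow>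
      ((\<lambda>s. u s k) has_vector_derivative c s * rhs_u N s (u s) (v s) k) (at s within {0..})"
    and dv: "\<And>s k. 0 \<le> s \<Longrightarrow> k \<in> modes N \<Longrightarrow>
      ((\<lambda>s. v s k) has_vector_derivative c s * rhs_v N s (u s) (v s) k) (at s within {0..})"
    and "0 \<le> t"
  shows "modal_energy N (u t) (v t) = modal_energy N (u 0) (v 0)"
proof -
  have "(\<lambda>s. complex_of_real (modal_energy N (u s) (v s))) t = (\<lambda>s. complex_of_real (modal_energy N (u s) (v s))) 0"
  proof (rule has_vector_derivative_zero_Ici_imp_constant[OF _ \<open>0 \<le> t\<close>])
    fix s :: real
    assume "0 \<le> s"
    let ?y = "\<Sum>k\<in>modes N. cnj (3 * u s k - v s k) * (c s * rhs_u N s (u s) (v s) k)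
        + cnj (3 * v s k - u s k) * (c s * rhs_v N s (u s) (v s) k)"
    have derivative: "((\<lambda>s. complex_of_real (modal_energy N (u s) (v s))) has_vector_derivative ?y + cnj ?y)
        (at s within {0..})"
      by (rule modal_energy_has_vector_derivative) (use du dv \<open>0 \<le> s\<close> in auto)
    have "?y = c s * energy_flux N s (u s) (v s)"
      unfolding energy_flux_def sum_distrib_left by (rule sum.cong) (simp_all add: algebra_simps)
    also have "\<dots> = 0"
      using energy_flux_zero symmetric[OF \<open>0 \<le> s\<close>] by simp
    finally show "((\<lambda>s. complex_of_real (modal_energy N (u s) (v s))) has_vector_derivative 0)
        (at s within {0..})"
      using derivative by simp
  qed
  then show ?thesis
    by simp
qed

lemma in_H0_imp_conj_symmetric: "in_H0 w \<Longrightarrow> conj_symmetric w"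
  by (simp add: in_H0_def conj_symmetric_def)

lemma infsum_change_finite:
  fixes f g :: "'a \<Rightarrow> real"
  assumes f: "f summable_on A" and "finite F" "F \<subseteq> A"
    and eq: "\<And>x. x \<in> A \<Longrightarrow> x \<notin> F \<Longrightarrow> g x = f x"
  shows "g summable_on A" and "infsum g A = infsum f A + (\<Sum>x\<in>F. g x - f x)"
proof -
  define h where "h x = (if x \<in> F then g x - f x else 0)" for x
  have h: "h summable_on A"
    by (rule summable_on_cong_neutral[where S=F, THEN iffD1]) (use assms in \<open>auto simp: h_def\<close>)
  have g: "\<And>x. x \<in> A \<Longrightarrow> g x = f x + h x"
    using eq by (auto simp: h_def)
  show "g summable_on A"
    using summable_on_add[OF f h] by (rule summable_on_cong[THEN iffD1, rotated]) (use g in auto)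
  have "infsum h A = (\<Sum>x\<in>F. g x - f x)"
    by (subst infsum_cong_neutral[where T=F]) (use assms in \<open>auto simp: h_def\<close>)
  then show "infsum g A = infsum f A + (\<Sum>x\<in>F. g x - f x)"
    using infsum_add[OF f h] infsum_cong[of A g "\<lambda>x. f x + h x"] g by simp
qed

lemma summable_on_cmod_diff_sq:
  assumes "in_H0 a" "in_H0 b"
  shows "(\<lambda>k. (cmod (a k - b k))\<^sup>2) summable_on (UNIV - {0})"
proof (rule summable_on_comparison_test)
  show "(\<lambda>k. 2 * (cmod (a k))\<^sup>2 + 2 * (cmod (b k))\<^sup>2) summable_on (UNIV - {0})"
    using assms unfolding in_H0_def by (intro summable_on_add summable_on_cmult_right) auto
  fix k :: int
  have "(cmod (a k - b k))\<^sup>2 \<le> (cmod (a k) + cmod (b k))\<^sup>2"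
    by (simp add: power_mono norm_triangle_ineq4)
  also have "\<dots> \<le> 2 * (cmod (a k))\<^sup>2 + 2 * (cmod (b k))\<^sup>2"
    using zero_le_power2[of "cmod (a k) - cmod (b k)"] unfolding power2_sum power2_diff by linarith
  finally show "(cmod (a k - b k))\<^sup>2 \<le> 2 * (cmod (a k))\<^sup>2 + 2 * (cmod (b k))\<^sup>2" .
qed simp

lemma in_H0_change_modes:
  assumes "in_H0 w" "\<And>k. k \<notin> modes N \<Longrightarrow> w' k = w k" "conj_symmetric w'"
  shows "in_H0 w'"
proof -
  have "(\<lambda>k. (cmod (w' k))\<^sup>2) summable_on (UNIV - {0})"
    by (rule infsum_change_finite(1)[where f="\<lambda>k. (cmod (w k))\<^sup>2" and F="modes N"])
       (use assms in \<open>auto simp: in_H0_def\<close>)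
  with assms show ?thesis
    using assms(2)[of 0] by (simp add: in_H0_def conj_symmetric_def)
qed

lemma energy_change_modes:
  assumes "in_H0 a0" "in_H0 b0" and eq: "\<And>k. k \<notin> modes N \<Longrightarrow> a k = a0 k \<and> b k = b0 k"
  shows "energy a b = energy a0 b0 + modal_energy N a b - modal_energy N a0 b0"
proof -
  have sub: "modes N \<subseteq> UNIV - {0}"
    by auto
  have "H0_norm_sq a = H0_norm_sq a0 + (\<Sum>k\<in>modes N. (cmod (a k))\<^sup>2 - (cmod (a0 k))\<^sup>2)"
    "H0_norm_sq b = H0_norm_sq b0 + (\<Sum>k\<in>modes N. (cmod (b k))\<^sup>2 - (cmod (b0 k))\<^sup>2)"
    unfolding H0_norm_sq_def
    by (rule infsum_change_finite(2); use assms sub in \<open>auto simp: in_H0_def\<close>)+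
  moreover have "H0_norm_sq (\<lambda>k. a k - b k) = H0_norm_sq (\<lambda>k. a0 k - b0 k) +
      (\<Sum>k\<in>modes N. (cmod (a k - b k))\<^sup>2 - (cmod (a0 k - b0 k))\<^sup>2)"
    unfolding H0_norm_sq_def
    by (rule infsum_change_finite(2)) (use summable_on_cmod_diff_sq[OF assms(1,2)] sub eq in auto)
  moreover have "modal_energy N a b - modal_energy N a0 b0 =
      2 * (\<Sum>k\<in>modes N. (cmod (a k))\<^sup>2 - (cmod (a0 k))\<^sup>2)
    + 2 * (\<Sum>k\<in>modes N. (cmod (b k))\<^sup>2 - (cmod (b0 k))\<^sup>2)
    + (\<Sum>k\<in>modes N. (cmod (a k - b k))\<^sup>2 - (cmod (a0 k - b0 k))\<^sup>2)"
    unfolding modal_energy_def sum_distrib_left sum.distrib[symmetric] sum_subtractf[symmetric]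
    by (rule sum.cong) (simp_all add: algebra_simps)
  ultimately show ?thesis
    unfolding energy_def by linarith
qed

lemma galerkin_solution_conj_symmetric:
  assumes "galerkin_solution N uin vin u v" "0 \<le> s"
  shows "conj_symmetric (u s) \<and> conj_symmetric (v s)"
  using assms in_H0_imp_conj_symmetric unfolding galerkin_solution_def by auto

lemma galerkin_solution_energy_conserved:
  assumes sol: "galerkin_solution N uin vin u v" and "in_H0 uin" "in_H0 vin" "0 \<le> t"
  shows "energy (u t) (v t) = energy uin vin"
proof -
  have init: "u 0 = uin" "v 0 = vin"
    and du: "\<And>s k. 0 \<le> s \<Longrightarrow> ((\<lambda>s. u s k) has_vector_derivative rhs_u N s (u s) (v s) k) (at s within {0..})"
    and dv: "\<And>s k. 0 \<le> s \<Longrightarrow> ((\<lambda>s. v s k) has_vector_derivative rhs_v N s (u s) (v s) k) (at s within {0..})"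
    using sol unfolding galerkin_solution_def by auto
  have "((\<lambda>s. u s k) has_vector_derivative 0) (at s within {0..})"
    "((\<lambda>s. v s k) has_vector_derivative 0) (at s within {0..})" if "0 \<le> s" "k \<notin> modes N" for s k
    using du[OF that(1), of k] dv[OF that(1), of k] that(2) by (simp_all add: rhs_u_altdef rhs_v_altdef)
  then have "(\<lambda>s. u s k) t = (\<lambda>s. u s k) 0" "(\<lambda>s. v s k) t = (\<lambda>s. v s k) 0" if "k \<notin> modes N" for k
    using that \<open>0 \<le> t\<close> by (auto intro!: has_vector_derivative_zero_Ici_imp_constant)
  then have "energy (u t) (v t) = energy uin vin + modal_energy N (u t) (v t) - modal_energy N uin vin"
    by (intro energy_change_modes) (use assms init in auto)
  moreover have "modal_energy N (u t) (v t) = modal_energy N (u 0) (v 0)"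
    by (rule modal_energy_constant[where c="\<lambda>_. 1"])
       (use galerkin_solution_conj_symmetric[OF sol] du dv \<open>0 \<le> t\<close> in simp_all)
  ultimately show ?thesis
    using init by simp
qed

section \<open>The truncated system as an ODE in a Banach space\<close>

instance bcontfun :: (metric_space, banach) banach ..

text \<open>States of the truncated system are bounded continuous functions on the real line, because
  the library's Banach space of bounded continuous functions needs a metric domain, which \<open>int\<close>
  is not. The Fourier mode \<open>k\<close> is carried by a bump at \<open>k\<close>; the bumps have disjoint supports.\<close>

definition bump :: "int \<Rightarrow> real \<Rightarrow> real" where
  "bump k x = max 0 (1 - 2 * \<bar>x - of_int k\<bar>)"

lemma one_le_abs_of_int_diff: "j \<noteq> k \<Longrightarrow> 1 \<le> \<bar>real_of_int j - of_int k\<bar>"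
  by (metis of_int_1_le_iff of_int_abs of_int_diff zero_less_abs_iff int_one_le_iff_zero_less
      eq_iff_diff_eq_0)

lemma bump_of_int [simp]: "bump k (of_int j) = (if j = k then 1 else 0)"
  using one_le_abs_of_int_diff[of j k] by (auto simp: bump_def)

lemma bump_eq_0: "k \<noteq> round x \<Longrightarrow> bump k x = 0"
  using one_le_abs_of_int_diff[of k "round x"] of_int_round_abs_le[of x]
  by (auto simp: bump_def max_def abs_if split: if_splits)

lemma bump_bounds: "0 \<le> bump k x" "bump k x \<le> 1"
  by (auto simp: bump_def)

definition mode_vector :: "int \<Rightarrow> 'a::real_normed_vector \<Rightarrow> (real \<Rightarrow>\<^sub>C 'a)" where
  "mode_vector k z = Bcontfun (\<lambda>x. bump k x *\<^sub>R z)"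

lemma apply_mode_vector: "apply_bcontfun (mode_vector k z) x = bump k x *\<^sub>R z"
proof -
  have "(\<lambda>x. bump k x *\<^sub>R z) \<in> bcontfun"
    by (rule bcontfun_normI[where b="norm z"])
       (auto simp: bump_def bump_bounds intro!: continuous_intros mult_left_le_one_le)
  then show ?thesis
    unfolding mode_vector_def by (simp add: Bcontfun_inverse)
qed

lemma bounded_linear_mode_vector: "bounded_linear (mode_vector k)"
  by (rule bounded_linear_intro[where K=1])
     (auto intro!: bcontfun_eqI norm_bound mult_left_le_one_le
       simp: apply_mode_vector scaleR_add_right bump_bounds)

lemma apply_sum_mode_vector:
  "apply_bcontfun (\<Sum>k\<in>A. mode_vector k (f k)) x = (\<Sum>k\<in>A. bump k x *\<^sub>R f k)"
  by (induction A rule: infinite_finite_induct) (simp_all add: apply_mode_vector)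

lemma apply_sum_mode_vector_of_int:
  "finite A \<Longrightarrow> apply_bcontfun (\<Sum>k\<in>A. mode_vector k (f k)) (of_int j) = (if j \<in> A then f j else 0)"
  by (simp add: apply_sum_mode_vector if_distrib[of "\<lambda>c. c *\<^sub>R _"] cong: if_cong)

lemma norm_sum_mode_vector_le:
  assumes "\<And>k. k \<in> A \<Longrightarrow> norm (f k) \<le> d" "0 \<le> d"
  shows "norm (\<Sum>k\<in>A. mode_vector k (f k)) \<le> d"
proof (rule norm_bound)
  fix x
  have "(\<Sum>k\<in>A. bump k x *\<^sub>R f k) = (\<Sum>k\<in>A. if k = round x then bump k x *\<^sub>R f k else 0)"
    by (rule sum.cong) (auto simp: bump_eq_0)
  also have "norm \<dots> \<le> d"
    using assms bump_bounds[of "round x" x]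
    by (cases "finite A") (auto intro: order_trans[OF mult_left_le_one_le])
  finally show "norm (apply_bcontfun (\<Sum>k\<in>A. mode_vector k (f k)) x) \<le> d"
    unfolding apply_sum_mode_vector .
qed

lemma mode_vector_zero [simp]: "mode_vector k 0 = 0"
  by (rule bcontfun_eqI) (simp add: apply_mode_vector)

lemma continuous_on_mode_vector [continuous_intros]:
  "continuous_on S f \<Longrightarrow> continuous_on S (\<lambda>p. mode_vector k (f p))"
  by (rule continuous_on_compose2[OF linear_continuous_on[OF bounded_linear_mode_vector]]) auto

definition radial_retraction :: "real \<Rightarrow> 'a::real_normed_vector \<Rightarrow> 'a" where
  "radial_retraction R x = (if norm x \<le> R then x else (R / norm x) *\<^sub>R x)"

lemma norm_radial_retraction_le: "0 < R \<Longrightarrow> norm (radial_retraction R x) \<le> R"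
  by (auto simp: radial_retraction_def)

lemma radial_retraction_outside_lipschitz:
  fixes x y :: "'a::real_normed_vector"
  assumes "0 < R" "R < norm x" "norm y \<le> R"
  shows "norm ((R / norm x) *\<^sub>R x - y) \<le> 2 * norm (x - y)"
proof -
  have "0 < norm x"
    using assms by linarith
  have "norm ((R / norm x) *\<^sub>R x - x) = \<bar>R / norm x - 1\<bar> * norm x"
    by (metis norm_scaleR scaleR_diff_left scaleR_one)
  also have "\<dots> = norm x - R"
    using assms \<open>0 < norm x\<close> by (simp add: abs_if field_simps)
  finally have "norm ((R / norm x) *\<^sub>R x - y) \<le> (norm x - R) + norm (x - y)"
    using norm_triangle_ineq[of "(R / norm x) *\<^sub>R x - x" "x - y"] by simp
  also have "\<dots> \<le> 2 * norm (x - y)"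
    using norm_triangle_ineq2[of x y] assms(3) by simp
  finally show ?thesis .
qed

lemma radial_retraction_outside_outside_lipschitz:
  fixes x y :: "'a::real_normed_vector"
  assumes "0 < R" "R < norm x" "R < norm y"
  shows "norm ((R / norm x) *\<^sub>R x - (R / norm y) *\<^sub>R y) \<le> 2 * norm (x - y)"
proof -
  have "0 < norm x" "0 < norm y"
    using assms by linarith+
  have "(R / norm x) *\<^sub>R x - (R / norm y) *\<^sub>R y = (R / norm x) *\<^sub>R (x - y) + (R / norm x - R / norm y) *\<^sub>R y"
    by (simp add: algebra_simps)
  then have "norm ((R / norm x) *\<^sub>R x - (R / norm y) *\<^sub>R y)
      \<le> (R / norm x) * norm (x - y) + \<bar>R / norm x - R / norm y\<bar> * norm y"
    using norm_triangle_ineq[of "(R / norm x) *\<^sub>R (x - y)" "(R / norm x - R / norm y) *\<^sub>R y"] assms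
    by simp
  also have "\<bar>R / norm x - R / norm y\<bar> * norm y = (R / norm x) * \<bar>norm y - norm x\<bar>"
    using \<open>0 < norm x\<close> \<open>0 < norm y\<close> assms by (simp add: field_simps abs_if)
  also have "(R / norm x) * norm (x - y) + (R / norm x) * \<bar>norm y - norm x\<bar> \<le> norm (x - y) + norm (x - y)"
  proof (rule add_mono)
    have q: "0 \<le> R / norm x" "R / norm x \<le> 1"
      using assms \<open>0 < norm x\<close> by simp_all
    show "(R / norm x) * norm (x - y) \<le> norm (x - y)"
      by (rule mult_left_le_one_le[OF norm_ge_zero q])
    show "(R / norm x) * \<bar>norm y - norm x\<bar> \<le> norm (x - y)"
      using mult_left_le_one_le[OF abs_ge_zero q, of "norm y - norm x"] norm_triangle_ineq3[of y x]
      by (metis norm_minus_commute order_trans)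
  qed
  finally show ?thesis
    by simp
qed

lemma radial_retraction_lipschitz:
  fixes x y :: "'a::real_normed_vector"
  assumes "0 < R"
  shows "norm (radial_retraction R x - radial_retraction R y) \<le> 2 * norm (x - y)"
proof -
  consider "norm x \<le> R" "norm y \<le> R" | "R < norm x" "norm y \<le> R" | "norm x \<le> R" "R < norm y"
    | "R < norm x" "R < norm y"
    by linarith
  then show ?thesis
  proof cases
    case 3
    then show ?thesis
      using radial_retraction_outside_lipschitz[OF assms, of y x]
      by (simp add: radial_retraction_def norm_minus_commute)
  next
    case 4
    then show ?thesis
      using radial_retraction_outside_outside_lipschitz[OF assms] by (simp add: radial_retraction_def)
  qed (use radial_retraction_outside_lipschitz[OF assms] in \<open>auto simp: radial_retraction_def\<close>)
qed

lemma continuous_on_radial_retraction: "0 < R \<Longrightarrow> continuous_on S (radial_retraction R)"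
  by (rule lipschitz_on_continuous_on[where L=2], rule lipschitz_onI)
     (auto simp: dist_norm radial_retraction_lipschitz)

lemma radial_retraction_eq_scaleR:
  "radial_retraction R x = (if norm x \<le> R then 1 else R / norm x) *\<^sub>R x"
  by (simp add: radial_retraction_def)

lemma radial_retraction_zero [simp]: "radial_retraction R 0 = 0"
  by (simp add: radial_retraction_def)

type_synonym galerkin_state = "real \<Rightarrow>\<^sub>C (complex \<times> complex)"

definition coeff_u :: "galerkin_state \<Rightarrow> int \<Rightarrow> complex" where
  "coeff_u x k = fst (apply_bcontfun x (of_int k))"

definition coeff_v :: "galerkin_state \<Rightarrow> int \<Rightarrow> complex" where
  "coeff_v x k = snd (apply_bcontfun x (of_int k))"

definition hermitian_part :: "(int \<Rightarrow> complex) \<Rightarrow> int \<Rightarrow> complex" where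
  "hermitian_part f k = (f k + cnj (f (- k))) / 2"

text \<open>Taking Hermitian parts makes the field preserve conjugate symmetry without any appeal to
  uniqueness of solutions; on conjugate symmetric states it changes nothing.\<close>

definition galerkin_field :: "nat \<Rightarrow> real \<Rightarrow> galerkin_state \<Rightarrow> galerkin_state" where
  "galerkin_field N t x = (\<Sum>k\<in>modes N. mode_vector k
     (hermitian_part (rhs_u N t (coeff_u x) (coeff_v x)) k, hermitian_part (rhs_v N t (coeff_u x) (coeff_v x)) k))"

lemma coeff_galerkin_field:
  "coeff_u (galerkin_field N t x) k =
     (if k \<in> modes N then hermitian_part (rhs_u N t (coeff_u x) (coeff_v x)) k else 0)"
  "coeff_v (galerkin_field N t x) k =
     (if k \<in> modes N then hermitian_part (rhs_v N t (coeff_u x) (coeff_v x)) k else 0)"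
  unfolding galerkin_field_def coeff_u_def coeff_v_def by (simp_all add: apply_sum_mode_vector_of_int)

lemma bounded_linear_coeff: "bounded_linear (\<lambda>x. coeff_u x k)" "bounded_linear (\<lambda>x. coeff_v x k)"
  unfolding coeff_u_def coeff_v_def
  by (intro bounded_linear_compose[OF bounded_linear_fst] bounded_linear_compose[OF bounded_linear_snd]
      bounded_linear_intro[where K=1] norm_bounded; simp)+

lemma norm_coeff_le: "cmod (coeff_u x k) \<le> norm x" "cmod (coeff_v x k) \<le> norm x"
  unfolding coeff_u_def coeff_v_def
  using norm_fst_le[of "fst (apply_bcontfun x (of_int k))" "snd (apply_bcontfun x (of_int k))"]
    norm_snd_le[of "snd (apply_bcontfun x (of_int k))" "fst (apply_bcontfun x (of_int k))"]
    norm_bounded[of x "of_int k"]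
  by simp_all

lemma coeff_diff [simp]:
  "coeff_u (x - y) k = coeff_u x k - coeff_u y k" "coeff_v (x - y) k = coeff_v x k - coeff_v y k"
  by (simp_all add: coeff_u_def coeff_v_def)

lemma norm_mult_diff_le:
  fixes z w z' w' :: complex
  assumes "cmod z \<le> \<rho>" "cmod w' \<le> \<rho>" "cmod (z - z') \<le> d" "cmod (w - w') \<le> d"
  shows "cmod (z * w - z' * w') \<le> 2 * \<rho> * d"
proof -
  have "z * w - z' * w' = z * (w - w') + (z - z') * w'"
    by (simp add: algebra_simps)
  then have "cmod (z * w - z' * w') \<le> cmod z * cmod (w - w') + cmod (z - z') * cmod w'"
    by (metis norm_mult norm_triangle_ineq)
  also have "\<dots> \<le> \<rho> * d + d * \<rho>"
    using assms by (intro add_mono mult_mono) (auto intro: order_trans[OF norm_ge_zero])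
  finally show ?thesis
    by simp
qed

lemma resonant_product_lipschitz:
  fixes \<rho> d :: real
  assumes "\<And>j. cmod (f j) \<le> \<rho>" "\<And>j. cmod (g' j) \<le> \<rho>"
    and "\<And>j. cmod (f j - f' j) \<le> d" "\<And>j. cmod (g j - g' j) \<le> d" "0 \<le> \<rho>" "0 \<le> d"
  shows "cmod (resonant_product N t f g k - resonant_product N t f' g' k) \<le> card (modes N) * (2 * \<rho> * d)"
proof -
  let ?I = "{k1. k1 \<in> modes N \<and> k - k1 \<in> modes N}"
  have "cmod (resonant_product N t f g k - resonant_product N t f' g' k)
      \<le> (\<Sum>k1\<in>?I. cmod (resonance_phase t (k * k1 * (k - k1)) * (f k1 * g (k - k1) - f' k1 * g' (k - k1))))"
    unfolding resonant_product_def sum_subtractf[symmetric] right_diff_distrib[symmetric]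
    by (rule norm_sum)
  also have "\<dots> \<le> (\<Sum>k1\<in>?I. 2 * \<rho> * d)"
    by (rule sum_mono) (simp add: norm_mult resonance_phase_def norm_mult_diff_le assms)
  also have "\<dots> \<le> card (modes N) * (2 * \<rho> * d)"
    using assms by (simp, intro mult_right_mono) (auto intro!: card_mono)
  finally show ?thesis .
qed

lemma rhs_lipschitz:
  fixes \<rho> d :: real
  assumes "\<And>j. cmod (a j) \<le> \<rho>" "\<And>j. cmod (b j) \<le> \<rho>" "\<And>j. cmod (a' j) \<le> \<rho>" "\<And>j. cmod (b' j) \<le> \<rho>"
    and "\<And>j. cmod (a j - a' j) \<le> d" "\<And>j. cmod (b j - b' j) \<le> d" "0 \<le> \<rho>" "0 \<le> d"
  shows "cmod (rhs_u N t a b k - rhs_u N t a' b' k) \<le> 2 * N * card (modes N) * \<rho> * d"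
    and "cmod (rhs_v N t a b k - rhs_v N t a' b' k) \<le> 2 * N * card (modes N) * \<rho> * d"
proof -
  let ?P = "resonant_product N t" and ?C = "card (modes N) * (2 * \<rho> * d)"
  have *: "cmod (\<i> / 2 * of_int k * (p - q)) \<le> 2 * N * card (modes N) * \<rho> * d"
    if "k \<in> modes N" "cmod p \<le> ?C" "cmod q \<le> ?C" for p q
  proof -
    have "\<bar>real_of_int k\<bar> \<le> N"
      using that(1) unfolding modes_def by (metis mem_Collect_eq of_int_abs of_int_le_iff of_int_of_nat_eq)
    then have "cmod (\<i> / 2 * of_int k) \<le> N / 2"
      by (simp add: norm_mult)
    moreover have "cmod (p - q) \<le> ?C + ?C"
      using norm_triangle_ineq4[of p q] that(2,3) by linarith
    ultimately have "cmod (\<i> / 2 * of_int k * (p - q)) \<le> N / 2 * (?C + ?C)"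
      unfolding norm_mult[of "\<i> / 2 * of_int k"] by (rule mult_mono) simp_all
    then show ?thesis
      by (simp add: algebra_simps)
  qed
  have "0 \<le> 2 * N * card (modes N) * \<rho> * d"
    using assms by simp
  moreover have "cmod (?P a b k - ?P a' b' k) \<le> ?C" "cmod (?P a a k - ?P a' a' k) \<le> ?C"
    "cmod (?P b b k - ?P b' b' k) \<le> ?C"
    by (rule resonant_product_lipschitz; use assms in simp)+
  moreover have "rhs_u N t a b k - rhs_u N t a' b' k = (if k \<in> modes N
      then \<i> / 2 * of_int k * ((?P a b k - ?P a' b' k) - (?P a a k - ?P a' a' k)) else 0)"
    "rhs_v N t a b k - rhs_v N t a' b' k = (if k \<in> modes N
      then \<i> / 2 * of_int k * ((?P a b k - ?P a' b' k) - (?P b b k - ?P b' b' k)) else 0)"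
    by (simp_all add: rhs_u_altdef rhs_v_altdef algebra_simps)
  ultimately show "cmod (rhs_u N t a b k - rhs_u N t a' b' k) \<le> 2 * N * card (modes N) * \<rho> * d"
    "cmod (rhs_v N t a b k - rhs_v N t a' b' k) \<le> 2 * N * card (modes N) * \<rho> * d"
    using * by auto
qed

lemma hermitian_part_lipschitz:
  assumes "\<And>j. cmod (f j - g j) \<le> d"
  shows "cmod (hermitian_part f k - hermitian_part g k) \<le> d"
proof -
  have "hermitian_part f k - hermitian_part g k = ((f k - g k) + cnj (f (- k) - g (- k))) / 2"
    by (simp add: hermitian_part_def field_simps)
  also have "cmod \<dots> \<le> (cmod (f k - g k) + cmod (f (- k) - g (- k))) / 2"
    using norm_triangle_ineq[of "f k - g k" "cnj (f (- k) - g (- k))"]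
    by (simp add: norm_divide del: complex_cnj_diff)
  also have "\<dots> \<le> d"
    using assms[of k] assms[of "- k"] by simp
  finally show ?thesis .
qed

lemma hermitian_part_uminus: "hermitian_part f (- k) = cnj (hermitian_part f k)"
  by (simp add: hermitian_part_def add.commute)

lemma hermitian_part_conj_symmetric: "conj_symmetric f \<Longrightarrow> hermitian_part f = f"
  by (auto simp: hermitian_part_def conj_symmetric_def)

lemma galerkin_field_lipschitz:
  fixes R :: real
  assumes "norm x \<le> R" "norm y \<le> R"
  shows "norm (galerkin_field N t x - galerkin_field N t y) \<le> 4 * N * card (modes N) * R * norm (x - y)"
proof -
  let ?B = "2 * N * card (modes N) * R * norm (x - y)"
  have "0 \<le> R"
    using assms norm_ge_zero order_trans by blast
  have bounds: "\<And>j. cmod (coeff_u x j) \<le> R" "\<And>j. cmod (coeff_v x j) \<le> R"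
    "\<And>j. cmod (coeff_u y j) \<le> R" "\<And>j. cmod (coeff_v y j) \<le> R"
    using assms norm_coeff_le order_trans by blast+
  have diffs: "\<And>j. cmod (coeff_u x j - coeff_u y j) \<le> norm (x - y)"
    "\<And>j. cmod (coeff_v x j - coeff_v y j) \<le> norm (x - y)"
    using norm_coeff_le[of "x - y"] by simp_all
  have "norm (hermitian_part (rhs_u N t (coeff_u x) (coeff_v x)) k - hermitian_part (rhs_u N t (coeff_u y) (coeff_v y)) k,
      hermitian_part (rhs_v N t (coeff_u x) (coeff_v x)) k - hermitian_part (rhs_v N t (coeff_u y) (coeff_v y)) k)
      \<le> ?B + ?B" for k
    by (rule order_trans[OF norm_Pair_le], intro add_mono hermitian_part_lipschitz rhs_lipschitz)
       (use bounds diffs \<open>0 \<le> R\<close> in simp_all)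
  then have "norm (galerkin_field N t x - galerkin_field N t y) \<le> ?B + ?B"
    unfolding galerkin_field_def sum_subtractf[symmetric]
      linear_diff[OF bounded_linear.linear[OF bounded_linear_mode_vector], symmetric]
    using \<open>0 \<le> R\<close> by (intro norm_sum_mode_vector_le) simp_all
  then show ?thesis
    by (simp add: algebra_simps)
qed

lemma galerkin_field_zero [simp]: "galerkin_field N t 0 = 0"
proof -
  have zero: "(0::complex, 0::complex) = 0"
    by (simp add: zero_prod_def)
  have "coeff_u 0 = (\<lambda>_. 0)" "coeff_v 0 = (\<lambda>_. 0)"
    by (auto simp: coeff_u_def coeff_v_def)
  moreover have "resonant_product N t (\<lambda>_. 0) (\<lambda>_. 0) k = 0" for k
    by (simp add: resonant_product_def)
  ultimately show ?thesis
    by (simp add: galerkin_field_def rhs_u_altdef rhs_v_altdef hermitian_part_def zero)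
qed

lemma continuous_on_galerkin_field:
  assumes "continuous_on S tt" "continuous_on S xx"
  shows "continuous_on S (\<lambda>p. galerkin_field N (tt p) (xx p))"
proof -
  have coeffs: "continuous_on S (\<lambda>p. coeff_u (xx p) j)" "continuous_on S (\<lambda>p. coeff_v (xx p) j)" for j
    using continuous_on_compose2[OF linear_continuous_on[OF bounded_linear_coeff(1)] assms(2)]
      continuous_on_compose2[OF linear_continuous_on[OF bounded_linear_coeff(2)] assms(2)] by auto
  have product: "continuous_on S (\<lambda>p. resonant_product N (tt p) (f p) (g p) k)"
    if "\<And>j. continuous_on S (\<lambda>p. f p j)" "\<And>j. continuous_on S (\<lambda>p. g p j)" for f g k
    unfolding resonant_product_def resonance_phase_def by (intro continuous_intros assms that)
  then have "continuous_on S (\<lambda>p. rhs_u N (tt p) (coeff_u (xx p)) (coeff_v (xx p)) k)"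
    "continuous_on S (\<lambda>p. rhs_v N (tt p) (coeff_u (xx p)) (coeff_v (xx p)) k)" for k
    unfolding rhs_u_altdef rhs_v_altdef
    by (cases "k \<in> modes N"; simp; intro continuous_intros product coeffs)+
  then show ?thesis
    unfolding galerkin_field_def hermitian_part_def by (intro continuous_intros) auto
qed

lemma conj_symmetric_coeff_galerkin_field:
  "conj_symmetric (coeff_u (galerkin_field N t x))" "conj_symmetric (coeff_v (galerkin_field N t x))"
  unfolding conj_symmetric_def coeff_galerkin_field by (simp_all add: hermitian_part_uminus)

lemma coeff_scaleR [simp]:
  "coeff_u (c *\<^sub>R x) k = of_real c * coeff_u x k" "coeff_v (c *\<^sub>R x) k = of_real c * coeff_v x k"
  by (simp_all add: coeff_u_def coeff_v_def scaleR_conv_of_real)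

definition mode_projection :: "nat \<Rightarrow> galerkin_state \<Rightarrow> galerkin_state" where
  "mode_projection N x = (\<Sum>k\<in>modes N. mode_vector k (coeff_u x k, coeff_v x k))"

lemma bounded_linear_mode_projection: "bounded_linear (mode_projection N)"
  unfolding mode_projection_def
  by (intro bounded_linear_sum bounded_linear_compose[OF bounded_linear_mode_vector] bounded_linear_Pair
      bounded_linear_coeff)

lemma mode_projection_galerkin_field: "mode_projection N (galerkin_field N t x) = galerkin_field N t x"
  unfolding mode_projection_def coeff_galerkin_field by (simp add: galerkin_field_def cong: sum.cong)

lemma norm_mode_projection_le:
  assumes "\<And>k. k \<in> modes N \<Longrightarrow> cmod (coeff_u x k) \<le> d" "\<And>k. k \<in> modes N \<Longrightarrow> cmod (coeff_v x k) \<le> d"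
    and "0 \<le> d"
  shows "norm (mode_projection N x) \<le> 2 * d"
proof -
  have "norm (coeff_u x k, coeff_v x k) \<le> 2 * d" if "k \<in> modes N" for k
    using norm_Pair_le[of "coeff_u x k" "coeff_v x k"] assms(1,2)[OF that] by linarith
  then show ?thesis
    unfolding mode_projection_def using assms(3) by (intro norm_sum_mode_vector_le) simp_all
qed

lemma truncated_galerkin_flow_exists:
  assumes "0 < R"
  shows "\<exists>X. X 0 = x0 \<and>
    (\<forall>t\<ge>0. (X has_vector_derivative galerkin_field N t (radial_retraction R (X t))) (at t within {0..}))"
proof -
  define K where "K = 4 * N * card (modes N) * R"
  have "0 \<le> K"
    using assms by (simp add: K_def)
  have lipschitz: "norm (galerkin_field N t (radial_retraction R x) - galerkin_field N t (radial_retraction R y))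
      \<le> K * norm (radial_retraction R x - radial_retraction R y)" for t x y
    unfolding K_def by (intro galerkin_field_lipschitz norm_radial_retraction_le assms)
  interpret globally_lipschitz_field "\<lambda>t x. galerkin_field N t (radial_retraction R x)" "2 * K + 1" "K * R"
  proof
    show "continuous_on UNIV (\<lambda>p. galerkin_field N (fst p) (radial_retraction R (snd p)))"
      by (intro continuous_on_galerkin_field continuous_on_compose2[OF continuous_on_radial_retraction[OF assms]]
          continuous_intros) auto
    fix t :: real and x y :: galerkin_state
    have "K * norm (radial_retraction R x - radial_retraction R y) \<le> K * (2 * norm (x - y))"
      using radial_retraction_lipschitz[OF assms] \<open>0 \<le> K\<close> by (rule mult_left_mono)
    then show "norm (galerkin_field N t (radial_retraction R x) - galerkin_field N t (radial_retraction R y))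
        \<le> (2 * K + 1) * norm (x - y)"
      using lipschitz[of t x y] by (simp add: algebra_simps) (use norm_ge_zero[of "x - y"] in linarith)
    have "K * norm (radial_retraction R x - radial_retraction R 0) \<le> K * R"
      using norm_radial_retraction_le[OF assms] \<open>0 \<le> K\<close> by (intro mult_left_mono) simp_all
    then show "norm (galerkin_field N t (radial_retraction R x)) \<le> K * R"
      using lipschitz[of t x 0] by simp
  qed (use \<open>0 \<le> K\<close> in simp)
  show ?thesis
    by (rule global_solution_exists)
qed

lemma conj_symmetric_preserved:
  assumes "conj_symmetric (a 0)"
    and "\<And>s j. 0 \<le> s \<Longrightarrow> ((\<lambda>s. a s j) has_vector_derivative d s j) (at s within {0..})"
    and "\<And>s. 0 \<le> s \<Longrightarrow> conj_symmetric (d s)" and "0 \<le> t"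
  shows "conj_symmetric (a t)"
  unfolding conj_symmetric_def
proof
  fix j
  have "(\<lambda>s. a s (- j) - cnj (a s j)) t = (\<lambda>s. a s (- j) - cnj (a s j)) 0"
  proof (rule has_vector_derivative_zero_Ici_imp_constant[OF _ \<open>0 \<le> t\<close>])
    fix s :: real
    assume "0 \<le> s"
    have "((\<lambda>s. a s (- j) - cnj (a s j)) has_vector_derivative d s (- j) - cnj (d s j)) (at s within {0..})"
      by (intro has_vector_derivative_diff has_vector_derivative_cnj assms(2) \<open>0 \<le> s\<close>)
    with assms(3)[OF \<open>0 \<le> s\<close>]
    show "((\<lambda>s. a s (- j) - cnj (a s j)) has_vector_derivative 0) (at s within {0..})"
      by (simp add: conj_symmetric_def)
  qed
  with assms(1) show "cnj (a t j) = a t (- j)"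
    by (simp add: conj_symmetric_def)
qed

locale truncated_galerkin_flow =
  fixes N :: nat and uin vin :: "int \<Rightarrow> complex" and R :: real and X :: "real \<Rightarrow> galerkin_state"
  assumes initial_data: "in_H0 uin" "in_H0 vin"
    and radius: "R = 2 * sqrt (modal_energy N uin vin) + 1"
    and initial_state: "X 0 = (\<Sum>k\<in>modes N. mode_vector k (uin k, vin k))"
    and flow: "\<And>t. 0 \<le> t \<Longrightarrow>
      (X has_vector_derivative galerkin_field N t (radial_retraction R (X t))) (at t within {0..})"
begin

lemma coeff_initial:
  "coeff_u (X 0) k = (if k \<in> modes N then uin k else 0)"
  "coeff_v (X 0) k = (if k \<in> modes N then vin k else 0)"
  unfolding initial_state coeff_u_def coeff_v_def by (simp_all add: apply_sum_mode_vector_of_int)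

lemma coeff_has_vector_derivative:
  assumes "0 \<le> s"
  shows "((\<lambda>s. coeff_u (X s) k) has_vector_derivative coeff_u (galerkin_field N s (radial_retraction R (X s))) k)
      (at s within {0..})"
    "((\<lambda>s. coeff_v (X s) k) has_vector_derivative coeff_v (galerkin_field N s (radial_retraction R (X s))) k)
      (at s within {0..})"
  by (rule bounded_linear.has_vector_derivative[OF bounded_linear_coeff(1) flow[OF assms]]
      bounded_linear.has_vector_derivative[OF bounded_linear_coeff(2) flow[OF assms]])+

lemma coeff_conj_symmetric:
  assumes "0 \<le> s"
  shows "conj_symmetric (coeff_u (X s)) \<and> conj_symmetric (coeff_v (X s))"
proof -
  have "conj_symmetric (coeff_u (X 0))" "conj_symmetric (coeff_v (X 0))"
    using in_H0_imp_conj_symmetric[OF initial_data(1)] in_H0_imp_conj_symmetric[OF initial_data(2)]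
    unfolding coeff_initial conj_symmetric_def by auto
  moreover have "conj_symmetric (coeff_u (X 0)) \<Longrightarrow> conj_symmetric (coeff_u (X s))"
    by (rule conj_symmetric_preserved[where a="\<lambda>s. coeff_u (X s)"
          and d="\<lambda>s. coeff_u (galerkin_field N s (radial_retraction R (X s)))"])
       (use coeff_has_vector_derivative(1) conj_symmetric_coeff_galerkin_field(1) assms in auto)
  moreover have "conj_symmetric (coeff_v (X 0)) \<Longrightarrow> conj_symmetric (coeff_v (X s))"
    by (rule conj_symmetric_preserved[where a="\<lambda>s. coeff_v (X s)"
          and d="\<lambda>s. coeff_v (galerkin_field N s (radial_retraction R (X s)))"])
       (use coeff_has_vector_derivative(2) conj_symmetric_coeff_galerkin_field(2) assms in auto)
  ultimately show ?thesis
    by blast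
qed

lemma mode_projection_flow:
  assumes "0 \<le> s"
  shows "mode_projection N (X s) = X s"
proof -
  have "(\<lambda>s. X s - mode_projection N (X s)) s = (\<lambda>s. X s - mode_projection N (X s)) 0"
  proof (rule has_vector_derivative_zero_Ici_imp_constant[OF _ assms])
    fix s :: real
    assume "0 \<le> s"
    from has_vector_derivative_diff[OF flow[OF this]
        bounded_linear.has_vector_derivative[OF bounded_linear_mode_projection[of N] flow[OF this]]]
    show "((\<lambda>s. X s - mode_projection N (X s)) has_vector_derivative 0) (at s within {0..})"
      by (simp add: mode_projection_galerkin_field)
  qed
  moreover have "mode_projection N (X 0) = X 0"
    unfolding mode_projection_def coeff_initial by (simp add: initial_state cong: sum.cong)
  ultimately show ?thesis
    by simp
qed

definition retraction_factor :: "real \<Rightarrow> real" where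
  "retraction_factor s = (if norm (X s) \<le> R then 1 else R / norm (X s))"

lemma coeff_has_vector_derivative_rhs:
  assumes "0 \<le> s"
  shows "((\<lambda>s. coeff_u (X s) k) has_vector_derivative
      of_real ((retraction_factor s)\<^sup>2) * rhs_u N s (coeff_u (X s)) (coeff_v (X s)) k) (at s within {0..})"
    "((\<lambda>s. coeff_v (X s) k) has_vector_derivative
      of_real ((retraction_factor s)\<^sup>2) * rhs_v N s (coeff_u (X s)) (coeff_v (X s)) k) (at s within {0..})"
proof -
  let ?c = "complex_of_real (retraction_factor s)" and ?a = "coeff_u (X s)" and ?b = "coeff_v (X s)"
  have retract: "coeff_u (radial_retraction R (X s)) = (\<lambda>j. ?c * ?a j)"
    "coeff_v (radial_retraction R (X s)) = (\<lambda>j. ?c * ?b j)"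
    by (auto simp: radial_retraction_eq_scaleR retraction_factor_def)
  have rhs: "rhs_u N s (coeff_u (radial_retraction R (X s))) (coeff_v (radial_retraction R (X s)))
      = (\<lambda>j. ?c\<^sup>2 * rhs_u N s ?a ?b j)"
    "rhs_v N s (coeff_u (radial_retraction R (X s))) (coeff_v (radial_retraction R (X s)))
      = (\<lambda>j. ?c\<^sup>2 * rhs_v N s ?a ?b j)"
    unfolding retract by (auto simp: rhs_scale)
  have "conj_symmetric (\<lambda>j. ?c\<^sup>2 * rhs_u N s ?a ?b j)" "conj_symmetric (\<lambda>j. ?c\<^sup>2 * rhs_v N s ?a ?b j)"
    using conj_symmetric_rhs_u conj_symmetric_rhs_v coeff_conj_symmetric[OF assms]
    by (auto simp: conj_symmetric_def)
  then have "coeff_u (galerkin_field N s (radial_retraction R (X s))) k = ?c\<^sup>2 * rhs_u N s ?a ?b k"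
    "coeff_v (galerkin_field N s (radial_retraction R (X s))) k = ?c\<^sup>2 * rhs_v N s ?a ?b k"
    unfolding coeff_galerkin_field rhs
    by (simp_all add: hermitian_part_conj_symmetric rhs_u_altdef rhs_v_altdef)
  then show "((\<lambda>s. coeff_u (X s) k) has_vector_derivative
      of_real ((retraction_factor s)\<^sup>2) * rhs_u N s ?a ?b k) (at s within {0..})"
    "((\<lambda>s. coeff_v (X s) k) has_vector_derivative
      of_real ((retraction_factor s)\<^sup>2) * rhs_v N s ?a ?b k) (at s within {0..})"
    using coeff_has_vector_derivative[OF assms, of k] by simp_all
qed

lemma modal_energy_flow:
  assumes "0 \<le> s"
  shows "modal_energy N (coeff_u (X s)) (coeff_v (X s)) = modal_energy N uin vin"
proof -
  have "modal_energy N (coeff_u (X s)) (coeff_v (X s)) = modal_energy N (coeff_u (X 0)) (coeff_v (X 0))"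
    by (rule modal_energy_constant[where c="\<lambda>s. of_real ((retraction_factor s)\<^sup>2)"])
       (use coeff_conj_symmetric coeff_has_vector_derivative_rhs assms in auto)
  also have "\<dots> = modal_energy N uin vin"
    unfolding modal_energy_def coeff_initial by (rule sum.cong) simp_all
  finally show ?thesis .
qed

lemma norm_flow_less_radius:
  assumes "0 \<le> s"
  shows "norm (X s) < R"
proof -
  have "norm (mode_projection N (X s)) \<le> 2 * sqrt (modal_energy N uin vin)"
    using cmod_le_sqrt_modal_energy[where a="coeff_u (X s)" and b="coeff_v (X s)" and N=N]
    by (intro norm_mode_projection_le) (simp_all add: modal_energy_flow[OF assms] modal_energy_nonneg)
  then show ?thesis
    using mode_projection_flow[OF assms] radius by simp
qed

lemma galerkin_solution:
  "galerkin_solution N uin vin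
    (\<lambda>t k. if k \<in> modes N then coeff_u (X t) k else uin k) (\<lambda>t k. if k \<in> modes N then coeff_v (X t) k else vin k)"
  (is "galerkin_solution N uin vin ?u ?v")
  unfolding galerkin_solution_def
proof (intro conjI allI impI)
  show "?u 0 = uin" "?v 0 = vin"
    by (auto simp: coeff_initial)
next
  fix t :: real
  assume "0 \<le> t"
  from coeff_conj_symmetric[OF \<open>0 \<le> t\<close>] in_H0_imp_conj_symmetric[OF initial_data(1)]
    in_H0_imp_conj_symmetric[OF initial_data(2)] have "conj_symmetric (?u t)" "conj_symmetric (?v t)"
    by (auto simp: conj_symmetric_def)
  then show "in_H0 (?u t)" "in_H0 (?v t)"
    by (auto intro: in_H0_change_modes[OF initial_data(1)] in_H0_change_modes[OF initial_data(2)])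
next
  fix t :: real and k
  assume "0 \<le> t"
  have "retraction_factor t = 1"
    using norm_flow_less_radius[OF \<open>0 \<le> t\<close>] by (simp add: retraction_factor_def)
  moreover have "rhs_u N t (?u t) (?v t) k = rhs_u N t (coeff_u (X t)) (coeff_v (X t)) k"
    "rhs_v N t (?u t) (?v t) k = rhs_v N t (coeff_u (X t)) (coeff_v (X t)) k"
    by (rule rhs_cong; simp)+
  ultimately show "((\<lambda>s. ?u s k) has_vector_derivative rhs_u N t (?u t) (?v t) k) (at t within {0..})"
    "((\<lambda>s. ?v s k) has_vector_derivative rhs_v N t (?u t) (?v t) k) (at t within {0..})"
    using coeff_has_vector_derivative_rhs[OF \<open>0 \<le> t\<close>, of k]
    by (auto simp: rhs_u_altdef rhs_v_altdef)
qed

end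

lemma galerkin_solution_exists:
  assumes "in_H0 uin" "in_H0 vin"
  shows "\<exists>u v. galerkin_solution N uin vin u v"
proof -
  define R where "R = 2 * sqrt (modal_energy N uin vin) + 1"
  have "0 < R"
    using modal_energy_nonneg[of N uin vin] by (simp add: R_def add_nonneg_pos)
  then obtain X where "truncated_galerkin_flow N uin vin R X"
    using truncated_galerkin_flow_exists[of R "\<Sum>k\<in>modes N. mode_vector k (uin k, vin k)" N] assms R_def
    by (auto simp: truncated_galerkin_flow_def)
  then show ?thesis
    using truncated_galerkin_flow.galerkin_solution by blast
qed

theorem proposition5p2:
  fixes uin vin :: "int \<Rightarrow> complex" and N :: nat
  assumes "in_H0 uin" and "in_H0 vin" and "N > 0"
  shows "(\<exists>u v. galerkin_solution N uin vin u v) \<and>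
         (\<forall>u v. galerkin_solution N uin vin u v \<longrightarrow>
            (\<forall>t\<ge>0. energy (u t) (v t) = energy uin vin))"
  using galerkin_solution_exists[OF assms(1,2)] galerkin_solution_energy_conserved[OF _ assms(1,2)]
  by blast

end
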